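(* Let $R$ be a GSWNC ring and let $e \in R$ be a non-zero idempotent. Then the corner ring $eRe$ is a GSWNC ring.
   Context: All rings are associative with identity; $eRe$ has identity $e$. An element $a$ of a ring is strongly weakly nil-clean if there exist an idempotent $f$ and a nilpotent $q$ with $fq = qf$ such that $a = q + f$ or $a = q - f$. A ring is GSWNC if every non-invertible element is strongly weakly nil-clean. *)

theory Defs
  imports "HOL-Algebra.Ring"
begin

definition swnc_elem :: "('a, 'b) ring_scheme \<Rightarrow> 'a \<Rightarrow> bool" where
  "swnc_elem R a \<longleftrightarrow>
     (\<exists>f \<in> carrier R. \<exists>q \<in> carrier R.
        f \<otimes>\<^bsub>R\<^esub> f = f \<and>
        (\<exists>n::nat. q [^]\<^bsub>R\<^esub> n = \<zero>\<^bsub>R\<^esub>) \<and>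
        f \<otimes>\<^bsub>R\<^esub> q = q \<otimes>\<^bsub>R\<^esub> f \<and>
        (a = q \<oplus>\<^bsub>R\<^esub> f \<or> a = q \<ominus>\<^bsub>R\<^esub> f))"

definition GSWNC :: "('a, 'b) ring_scheme \<Rightarrow> bool" where
  "GSWNC R \<longleftrightarrow> ring R \<and> (\<forall>a \<in> carrier R - Units R. swnc_elem R a)"

definition corner :: "('a, 'b) ring_scheme \<Rightarrow> 'a \<Rightarrow> 'a ring" where
  "corner R e = \<lparr>carrier = (\<lambda>x. e \<otimes>\<^bsub>R\<^esub> x \<otimes>\<^bsub>R\<^esub> e) ` carrier R,
                 monoid.mult = monoid.mult R, one = e,
                 zero = \<zero>\<^bsub>R\<^esub>, add = add R\<rparr>"

end

theory Submission
  imports Defs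
begin

(* Let a be a non-unit of eRe. Then x = a + (1 - e) is a non-unit of R, so x = q + f or
   x = q - f with f idempotent, q nilpotent and fq = qf. The element e commutes with x, and
   anything commuting with q + f commutes with f: for b with b(q + f) = (q + f)b, putting
   g = 1 - f, the element gbf satisfies q(gbf) = (gbf)(1 + q) and fbg satisfies
   (1 + q)(fbg) = (fbg)q, and since 1 + q is a unit, iterating up to the nilpotency index of q
   forces gbf = fbg = 0, i.e. bf = fbf = fb. Hence e commutes with f and q, and
   a = ex = eq + ef or eq - ef is a decomposition of the same kind inside eRe. *)

lemma (in monoid) nat_pow_intertwine:
  assumes "a \<in> carrier G" "x \<in> carrier G" "b \<in> carrier G" and "a \<otimes> x = x \<otimes> b"
  shows "a [^] (k::nat) \<otimes> x = x \<otimes> b [^] k"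
proof (induction k)
  case 0
  show ?case using assms by simp
next
  case (Suc k)
  have "a [^] Suc k \<otimes> x = a [^] k \<otimes> (a \<otimes> x)" using assms by (simp add: m_assoc)
  also have "\<dots> = (a [^] k \<otimes> x) \<otimes> b" using assms by (simp add: m_assoc)
  also have "\<dots> = x \<otimes> b [^] Suc k" using Suc assms by (simp add: m_assoc)
  finally show ?case .
qed

lemma (in monoid) Units_inv_commute:
  assumes x: "x \<in> Units G" and e: "e \<in> carrier G" and ex: "e \<otimes> x = x \<otimes> e"
  shows "e \<otimes> inv x = inv x \<otimes> e"
proof -
  have "inv x \<otimes> e = inv x \<otimes> e \<otimes> (x \<otimes> inv x)" using x e by simp
  also have "\<dots> = inv x \<otimes> (e \<otimes> x) \<otimes> inv x" using x e by (simp add: m_assoc Units_closed)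
  also have "\<dots> = e \<otimes> inv x" using x e ex by (simp add: m_assoc[symmetric] Units_closed)
  finally show ?thesis by simp
qed

context ring
begin

lemma nilpotent_uminus:
  assumes "q \<in> carrier R" and "q [^] (n::nat) = \<zero>"
  shows "(\<ominus> q) [^] n = \<zero>"
proof -
  have "(\<ominus> \<one> \<otimes> q) [^] n = (\<ominus> \<one>) [^] n \<otimes> q [^] n"
    using assms by (intro pow_mult_distrib) (simp_all add: l_minus r_minus)
  then show ?thesis using assms by (simp add: l_minus)
qed

lemma one_minus_nilpotent_Units:
  assumes p: "p \<in> carrier R" and "p [^] (n::nat) = \<zero>"
  shows "\<one> \<ominus> p \<in> Units R"
proof -
  \<comment> \<open>\<open>w\<close> is the truncated geometric series \<open>\<one> \<oplus> p \<oplus> \<dots> \<oplus> p [^] (k - 1)\<close>.\<close>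
  have "\<exists>w \<in> carrier R. (\<one> \<ominus> p) \<otimes> w = \<one> \<ominus> p [^] k \<and> w \<otimes> (\<one> \<ominus> p) = \<one> \<ominus> p [^] k"
    for k :: nat
  proof (induction k)
    case 0
    show ?case by (intro bexI[of _ \<zero>]) (simp_all add: p r_neg minus_eq)
  next
    case (Suc k)
    then obtain w where w: "w \<in> carrier R" "(\<one> \<ominus> p) \<otimes> w = \<one> \<ominus> p [^] k"
      "w \<otimes> (\<one> \<ominus> p) = \<one> \<ominus> p [^] k" by blast
    have "(\<one> \<ominus> p) \<otimes> (\<one> \<oplus> p \<otimes> w) = \<one> \<ominus> p \<oplus> p \<otimes> ((\<one> \<ominus> p) \<otimes> w)"
      and "(\<one> \<oplus> p \<otimes> w) \<otimes> (\<one> \<ominus> p) = \<one> \<ominus> p \<oplus> p \<otimes> (w \<otimes> (\<one> \<ominus> p))"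
      using p w(1) by (simp_all add: ring_simprules m_assoc)
    moreover have "p \<otimes> (\<one> \<ominus> p [^] k) = p \<ominus> p [^] Suc k"
      using p by (simp add: r_distr r_minus minus_eq nat_pow_Suc2[symmetric])
    then have "\<one> \<ominus> p \<oplus> p \<otimes> (\<one> \<ominus> p [^] k) = \<one> \<ominus> p [^] Suc k"
      using p by (simp del: nat_pow_Suc add: minus_eq a_assoc r_neg1)
    ultimately show ?case using p w by (intro bexI[of _ "\<one> \<oplus> p \<otimes> w"]) simp_all
  qed
  from this[of n] show ?thesis using assms unfolding Units_def by (auto simp: minus_eq)
qed

lemma one_add_nilpotent_Units:
  assumes "q \<in> carrier R" and "q [^] (n::nat) = \<zero>"
  shows "\<one> \<oplus> q \<in> Units R"
  using one_minus_nilpotent_Units[of "\<ominus> q" n] nilpotent_uminus[OF assms] assms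
  by (simp add: minus_eq)

lemma one_add_nilpotent_pow_Units:
  assumes "q \<in> carrier R" and "q [^] (n::nat) = \<zero>"
  shows "(\<one> \<oplus> q) [^] (k::nat) \<in> Units R"
  by (induction k) (simp_all add: one_add_nilpotent_Units[OF assms])

lemma nilpotent_intertwine_left_zero:
  assumes q: "q \<in> carrier R" "q [^] (n::nat) = \<zero>" and x: "x \<in> carrier R"
    and qx: "q \<otimes> x = x \<otimes> (\<one> \<oplus> q)"
  shows "x = \<zero>"
proof -
  let ?u = "(\<one> \<oplus> q) [^] n"
  have u: "?u \<in> Units R" using one_add_nilpotent_pow_Units[OF q] .
  have "x \<otimes> ?u = \<zero>" using nat_pow_intertwine[OF _ x _ qx, of n] q x by simp
  then have "x \<otimes> ?u \<otimes> inv ?u = \<zero>" using u by simp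
  then show ?thesis using u x by (simp add: m_assoc Units_closed)
qed

lemma nilpotent_intertwine_right_zero:
  assumes q: "q \<in> carrier R" "q [^] (n::nat) = \<zero>" and x: "x \<in> carrier R"
    and qx: "(\<one> \<oplus> q) \<otimes> x = x \<otimes> q"
  shows "x = \<zero>"
proof -
  let ?u = "(\<one> \<oplus> q) [^] n"
  have u: "?u \<in> Units R" using one_add_nilpotent_pow_Units[OF q] .
  have "?u \<otimes> x = \<zero>" using nat_pow_intertwine[OF _ x _ qx, of n] q x by simp
  then have "inv ?u \<otimes> (?u \<otimes> x) = \<zero>" using u by simp
  then show ?thesis using u x by (simp add: m_assoc[symmetric] Units_closed)
qed

lemma strongly_nil_clean_idempotent_commute:
  assumes f: "f \<in> carrier R" "f \<otimes> f = f" and q: "q \<in> carrier R" "q [^] (n::nat) = \<zero>"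
    and fq: "f \<otimes> q = q \<otimes> f" and b: "b \<in> carrier R"
    and ba: "b \<otimes> (q \<oplus> f) = (q \<oplus> f) \<otimes> b"
  shows "b \<otimes> f = f \<otimes> b"
proof -
  define a where "a = q \<oplus> f"
  define g where "g = \<one> \<ominus> f"
  have a: "a \<in> carrier R" and g: "g \<in> carrier R" unfolding a_def g_def using f q by simp_all
  have fg: "f \<otimes> g = \<zero>" and gf: "g \<otimes> f = \<zero>"
    unfolding g_def using f by (simp_all add: minus_eq r_distr l_distr r_minus l_minus r_neg)
  have gpf: "g \<oplus> f = \<one>" unfolding g_def using f by (simp add: minus_eq a_assoc l_neg)
  have af: "a \<otimes> f = f \<otimes> a" unfolding a_def using f q fq by (simp add: l_distr r_distr)
  have ag: "a \<otimes> g = g \<otimes> a" unfolding g_def using a f af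
    by (simp add: minus_eq l_distr r_distr l_minus r_minus)
  define x where "x = g \<otimes> b \<otimes> f"
  have "q \<otimes> x = a \<otimes> x" unfolding x_def a_def using f q g b fg
    by (simp add: l_distr m_assoc[symmetric])
  also have "\<dots> = x \<otimes> a" unfolding x_def using a f g b ba af ag a_def
    by (metis m_assoc m_closed)
  also have "\<dots> = x \<otimes> (\<one> \<oplus> q)" unfolding x_def a_def using f q g b
    by (simp add: r_distr m_assoc a_comm)
  finally have x0: "x = \<zero>"
    using nilpotent_intertwine_left_zero[OF q] g b f unfolding x_def by simp
  define y where "y = f \<otimes> b \<otimes> g"
  have "(\<one> \<oplus> q) \<otimes> y = a \<otimes> y" unfolding y_def a_def using f q g b
    by (simp add: l_distr m_assoc[symmetric] a_comm)
  also have "\<dots> = y \<otimes> a" unfolding y_def using a f g b ba af ag a_def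
    by (metis m_assoc m_closed)
  also have "\<dots> = y \<otimes> q" unfolding y_def a_def using f q g b gf
    by (simp add: r_distr m_assoc)
  finally have y0: "y = \<zero>"
    using nilpotent_intertwine_right_zero[OF q] g b f unfolding y_def by simp
  have "b \<otimes> f = (g \<oplus> f) \<otimes> b \<otimes> f" using gpf b by simp
  also have "\<dots> = f \<otimes> b \<otimes> (g \<oplus> f)"
    using x0 y0 f g b unfolding x_def y_def by (simp add: l_distr r_distr)
  also have "\<dots> = f \<otimes> b" using gpf f b by simp
  finally show ?thesis .
qed

lemma swnc_decomposition_commute:
  assumes f: "f \<in> carrier R" "f \<otimes> f = f" and q: "q \<in> carrier R" "q [^] (n::nat) = \<zero>"
    and fq: "f \<otimes> q = q \<otimes> f" and b: "b \<in> carrier R"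
    and x: "x = q \<oplus> f \<or> x = q \<ominus> f" and bx: "b \<otimes> x = x \<otimes> b"
  shows "b \<otimes> f = f \<otimes> b" and "b \<otimes> q = q \<otimes> b"
proof -
  show bf: "b \<otimes> f = f \<otimes> b"
  proof (cases "x = q \<oplus> f")
    case True
    then show ?thesis using strongly_nil_clean_idempotent_commute[OF f q fq b] bx by simp
  next
    case False
    then have "\<ominus> x = \<ominus> q \<oplus> f" using x f q by (simp add: minus_eq minus_add)
    moreover have "b \<otimes> \<ominus> x = \<ominus> x \<otimes> b" using bx b x f q by (auto simp: l_minus r_minus)
    moreover have "f \<otimes> \<ominus> q = \<ominus> q \<otimes> f" using fq f q by (simp add: l_minus r_minus)
    ultimately show ?thesis
      using strongly_nil_clean_idempotent_commute[OF f _ nilpotent_uminus[OF q] _ b] q by simp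
  qed
  from x have "b \<otimes> q \<oplus> b \<otimes> f = q \<otimes> b \<oplus> f \<otimes> b \<or> b \<otimes> q \<ominus> b \<otimes> f = q \<otimes> b \<ominus> f \<otimes> b"
    using bx b f q by (auto simp: l_distr r_distr minus_eq l_minus r_minus)
  then show "b \<otimes> q = q \<otimes> b" using bf b f q
    by (metis add.right_cancel minus_eq add.inv_closed m_closed)
qed

lemma idempotent_commute_mult:
  assumes "e \<in> carrier R" "e \<otimes> e = e" "c \<in> carrier R" "d \<in> carrier R"
    and "e \<otimes> c = c \<otimes> e"
  shows "e \<otimes> c \<otimes> (e \<otimes> d) = e \<otimes> (c \<otimes> d)"
proof -
  have "e \<otimes> c \<otimes> (e \<otimes> d) = e \<otimes> (c \<otimes> e) \<otimes> d" using assms(1,3,4) by (simp add: m_assoc)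
  also have "\<dots> = e \<otimes> (e \<otimes> c) \<otimes> d" using assms(5) by simp
  also have "\<dots> = e \<otimes> (c \<otimes> d)" using assms(1-4) by (simp add: m_assoc[symmetric])
  finally show ?thesis .
qed

end

lemma corner_simps:
  "mult (corner R e) = mult R" "one (corner R e) = e" "zero (corner R e) = zero R"
  "add (corner R e) = add R" "carrier (corner R e) = (\<lambda>x. e \<otimes>\<^bsub>R\<^esub> x \<otimes>\<^bsub>R\<^esub> e) ` carrier R"
  by (simp_all add: corner_def)

context ring
begin

lemma corner_carrier:
  assumes e: "e \<in> carrier R" "e \<otimes> e = e"
  shows "carrier (corner R e) = {y \<in> carrier R. e \<otimes> y = y \<and> y \<otimes> e = y}"
proof (intro equalityI subsetI)
  fix y assume "y \<in> carrier (corner R e)"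
  then obtain z where "z \<in> carrier R" "y = e \<otimes> z \<otimes> e" by (auto simp: corner_simps)
  then show "y \<in> {y \<in> carrier R. e \<otimes> y = y \<and> y \<otimes> e = y}"
    using e by (simp add: m_assoc[symmetric]) (simp add: m_assoc)
next
  fix y assume "y \<in> {y \<in> carrier R. e \<otimes> y = y \<and> y \<otimes> e = y}"
  then have "y = e \<otimes> y \<otimes> e" "y \<in> carrier R" by auto
  then show "y \<in> carrier (corner R e)" by (auto simp: corner_simps)
qed

lemma corner_ring:
  assumes e: "e \<in> carrier R" "e \<otimes> e = e"
  shows "ring (corner R e)"
proof (rule ringI)
  note corner = corner_carrier[OF e] corner_simps(1-4)
  show "abelian_group (corner R e)"
  proof (rule abelian_groupI)
    fix x assume "x \<in> carrier (corner R e)"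
    then show "\<exists>y \<in> carrier (corner R e). y \<oplus>\<^bsub>corner R e\<^esub> x = \<zero>\<^bsub>corner R e\<^esub>"
      using e by (intro bexI[of _ "\<ominus> x"]) (auto simp: corner l_minus r_minus l_neg)
  qed (use e in \<open>auto simp: corner l_distr r_distr a_ac\<close>)
  show "monoid (corner R e)"
    by (rule monoidI) (use e in \<open>auto simp: corner m_assoc[symmetric], simp add: m_assoc\<close>)
qed (auto simp: corner_carrier[OF e] corner_simps(1-4) l_distr r_distr)

lemma corner_nat_pow:
  assumes "y \<in> carrier R" and "e \<otimes> y = y"
  shows "y [^]\<^bsub>corner R e\<^esub> (Suc k) = y [^] (Suc k)"
  using assms by (induction k) (simp_all add: corner_simps)

lemma corner_a_minus:
  assumes e: "e \<in> carrier R" "e \<otimes> e = e"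
    and y: "y \<in> carrier (corner R e)" and z: "z \<in> carrier (corner R e)"
  shows "y \<ominus>\<^bsub>corner R e\<^esub> z = y \<ominus> z"
proof -
  interpret C: ring "corner R e" using corner_ring[OF e] .
  have "\<ominus>\<^bsub>corner R e\<^esub> z = \<ominus> z"
  proof (rule C.minus_equality)
    show "\<ominus> z \<in> carrier (corner R e)" and "\<ominus> z \<oplus>\<^bsub>corner R e\<^esub> z = \<zero>\<^bsub>corner R e\<^esub>"
      using z e by (auto simp: corner_carrier[OF e] corner_simps(1-4) l_minus r_minus l_neg)
  qed (rule z)
  then show ?thesis by (simp add: a_minus_def corner_simps)
qed

lemma corner_add_complement_mult:
  assumes e: "e \<in> carrier R" "e \<otimes> e = e" and a: "a \<in> carrier (corner R e)"
  shows "e \<otimes> (a \<oplus> (\<one> \<ominus> e)) = a" and "(a \<oplus> (\<one> \<ominus> e)) \<otimes> e = a"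
  using a e by (auto simp: corner_carrier minus_eq l_distr r_distr l_minus r_minus r_neg)

lemma Units_cornerI:
  assumes e: "e \<in> carrier R" "e \<otimes> e = e" and a: "a \<in> carrier (corner R e)"
    and unit: "a \<oplus> (\<one> \<ominus> e) \<in> Units R"
  shows "a \<in> Units (corner R e)"
proof -
  define x where "x = a \<oplus> (\<one> \<ominus> e)"
  have ex: "e \<otimes> x = a" "x \<otimes> e = a" unfolding x_def using corner_add_complement_mult[OF e a] .
  have x: "x \<in> Units R" "x \<in> carrier R" unfolding x_def using unit by auto
  define v where "v = e \<otimes> inv x"
  have eu: "e \<otimes> inv x = inv x \<otimes> e" using Units_inv_commute[OF x(1) e(1)] ex by simp
  have v: "v \<in> carrier (corner R e)" unfolding v_def corner_carrier[OF e]
    using e x eu by (simp add: m_assoc[symmetric]) (simp add: m_assoc)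
  have "a \<otimes> v = e \<otimes> (x \<otimes> inv x) \<otimes> e" unfolding v_def eu using ex(1)[symmetric] e x
    by (simp add: m_assoc del: Units_r_inv)
  moreover have "v \<otimes> a = e \<otimes> (inv x \<otimes> x) \<otimes> e" unfolding v_def using ex(2)[symmetric] e x
    by (simp add: m_assoc del: Units_l_inv)
  ultimately have "a \<otimes> v = e" "v \<otimes> a = e" using e x by simp_all
  then show ?thesis using a v unfolding Units_def by (auto simp: corner_simps(1,2))
qed

lemma swnc_elem_corner:
  assumes e: "e \<in> carrier R" "e \<otimes> e = e" and x: "x \<in> carrier R"
    and ex: "e \<otimes> x = x \<otimes> e" and "swnc_elem R x"
  shows "swnc_elem (corner R e) (e \<otimes> x)"
proof -
  obtain f q n where f: "f \<in> carrier R" "f \<otimes> f = f" and q: "q \<in> carrier R" "q [^] (n::nat) = \<zero>"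
    and fq: "f \<otimes> q = q \<otimes> f" and xd: "x = q \<oplus> f \<or> x = q \<ominus> f"
    using \<open>swnc_elem R x\<close> unfolding swnc_elem_def by blast
  have ef: "e \<otimes> f = f \<otimes> e" and eq: "e \<otimes> q = q \<otimes> e"
    using swnc_decomposition_commute[OF f q fq e(1) xd ex] by simp_all
  have f': "e \<otimes> f \<in> carrier (corner R e)" and q': "e \<otimes> q \<in> carrier (corner R e)"
    unfolding corner_carrier[OF e] using e f q ef eq
    by (simp_all add: m_assoc[symmetric]) (simp_all add: m_assoc)
  have "e \<otimes> f \<otimes>\<^bsub>corner R e\<^esub> (e \<otimes> f) = e \<otimes> f"
    using idempotent_commute_mult[OF e f(1) f(1) ef] f by (simp add: corner_simps)
  moreover have "(e \<otimes> q) [^]\<^bsub>corner R e\<^esub> (Suc n) = \<zero>\<^bsub>corner R e\<^esub>"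
    using corner_nat_pow[of "e \<otimes> q" e n] pow_mult_distrib[OF eq e(1) q(1), of "Suc n"] e q
    by (simp add: corner_simps m_assoc[symmetric])
  moreover have "e \<otimes> f \<otimes>\<^bsub>corner R e\<^esub> (e \<otimes> q) = e \<otimes> q \<otimes>\<^bsub>corner R e\<^esub> (e \<otimes> f)"
    using idempotent_commute_mult[OF e f(1) q(1) ef] idempotent_commute_mult[OF e q(1) f(1) eq] fq
    by (simp add: corner_simps)
  moreover have "e \<otimes> x = e \<otimes> q \<oplus>\<^bsub>corner R e\<^esub> e \<otimes> f \<or> e \<otimes> x = e \<otimes> q \<ominus>\<^bsub>corner R e\<^esub> e \<otimes> f"
    using xd e f q by (auto simp: corner_a_minus[OF e q' f'] corner_simps minus_eq r_distr r_minus)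
  ultimately show ?thesis unfolding swnc_elem_def using f' q' by blast
qed

lemma GSWNC_corner:
  assumes "GSWNC R" and e: "e \<in> carrier R" "e \<otimes> e = e"
  shows "GSWNC (corner R e)"
proof -
  have "swnc_elem (corner R e) a" if a: "a \<in> carrier (corner R e) - Units (corner R e)" for a
  proof -
    define x where "x = a \<oplus> (\<one> \<ominus> e)"
    have x: "x \<in> carrier R" unfolding x_def using a e by (auto simp: corner_carrier[OF e])
    have ex: "e \<otimes> x = a" "x \<otimes> e = a"
      unfolding x_def using corner_add_complement_mult[OF e] a by simp_all
    have "x \<notin> Units R" unfolding x_def using Units_cornerI[OF e] a by blast
    then have "swnc_elem R x" using \<open>GSWNC R\<close> x unfolding GSWNC_def by blast
    then show ?thesis using swnc_elem_corner[OF e x] ex by simp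
  qed
  then show ?thesis unfolding GSWNC_def using corner_ring[OF e] by blast
qed

end

theorem lemma2p14:
  fixes R :: "('a, 'b) ring_scheme" and e :: 'a
  assumes "GSWNC R"
    and "e \<in> carrier R"
    and "e \<otimes>\<^bsub>R\<^esub> e = e"
    and "e \<noteq> \<zero>\<^bsub>R\<^esub>"
  shows "GSWNC (corner R e)"
  using ring.GSWNC_corner[OF _ assms(1-3)] assms(1) GSWNC_def by blast

end
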